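(* Let $G$ be a connected graph with adjacency matrix $A$ and positive degrees, and let $e=(i,j)$, $i\ne j$, $a_{ij}>0$, be a cut-edge of $G$. Then for every $r>0$, \[ c_r(e)\le r^{-1}. \]
   Context: Graphs are undirected and possibly weighted on vertex set $\{1,\dots,n\}$, with symmetric nonnegative adjacency matrix $A=(a_{k\ell})$; $d=A\mathbf 1$, $D=\mathrm{diag}(d)$, $\|d\|_1=\sum_kd_k$, $D^{\pm1/2}=\mathrm{diag}(d_k^{\pm1/2})$; $e_k$ is the $k$-th column of the identity and $\mathbf 1$ the all-ones vector. The edge $e$ is a cut-edge if deleting it disconnects $G$. With $v=e_i-e_j$ and $\widehat A=A+a_{ij}vv^T$ (deleting edge $e$ and adding loops of weight $a_{ij}$ at $i$ and $j$; $\widehat A\mathbf 1=d$). For $r>0$ and symmetric nonnegative $B$ with $B\mathbf 1=d$, $K_r(B)=\operatorname{Tr}\Big(\big((1+r)I-D^{-1/2}BD^{-1/2}+\tfrac{1}{\|d\|_1}D^{1/2}\mathbf 1\mathbf 1^TD^{1/2}\big)^{-1}\Big)-(1+r)^{-1}$; the regularized score is $c_r(e)=K_r(\widehat A)-K_r(A)$. *)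

theory Defs
  imports "HOL-Analysis.Analysis"
begin

text \<open>Weighted undirected graphs on a finite vertex type 'n, given by a real matrix.\<close>

definition deg :: "real^'n^'n \<Rightarrow> real^'n" where
  "deg B = B *v (\<chi> k. 1)"

definition graph_connected :: "real^'n^'n \<Rightarrow> bool" where
  "graph_connected B \<longleftrightarrow> (\<forall>k l. (k, l) \<in> {(x, y). B $ x $ y > 0}\<^sup>*)"

definition delete_edge :: "real^'n^'n \<Rightarrow> 'n \<Rightarrow> 'n \<Rightarrow> real^'n^'n" where
  "delete_edge B i j = (\<chi> k l. if (k = i \<and> l = j) \<or> (k = j \<and> l = i) then 0 else B $ k $ l)"

definition is_cut_edge :: "real^'n^'n \<Rightarrow> 'n \<Rightarrow> 'n \<Rightarrow> bool" where
  "is_cut_edge B i j \<longleftrightarrow> B $ i $ j > 0 \<and> graph_connected B \<and> \<not> graph_connected (delete_edge B i j)"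

definition A_hat :: "real^'n^'n \<Rightarrow> 'n \<Rightarrow> 'n \<Rightarrow> real^'n^'n" where
  "A_hat B i j = (let v = axis i (1::real) - axis j 1 in
     (\<chi> k l. B $ k $ l + B $ i $ j * (v $ k * v $ l)))"

text \<open>K_r(B), where d = deg of the given matrix (for hat A, deg (hat A) = deg A).\<close>
definition Kreg :: "real \<Rightarrow> real^'n^'n \<Rightarrow> real" where
  "Kreg r B = (let d = deg B;
      Dm = (\<chi> k l. if k = l then 1 / sqrt (d $ k) else 0) :: real^'n^'n;
      s = (\<chi> k. sqrt (d $ k)) :: real^'n;
      M = (1 + r) *\<^sub>R mat 1 - Dm ** B ** Dm
          + (1 / (\<Sum>k\<in>UNIV. d $ k)) *\<^sub>R (\<chi> k l. s $ k * s $ l)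
    in trace (matrix_inv M) - 1 / (1 + r))"

definition c_score :: "real \<Rightarrow> real^'n^'n \<Rightarrow> 'n \<Rightarrow> 'n \<Rightarrow> real" where
  "c_score r A i j = Kreg r (A_hat A i j) - Kreg r A"

end

theory Submission
  imports Defs
begin

(*
  Deleting the edge and adding the two loops keeps every degree, so the matrix M_r(B) inverted in
  K_r changes by a rank-one term: M_r(A) = M_r(hat A) + a_ij w w^T with w = D^(-1/2) (e_i - e_j).
  The normalized adjacency matrix has numerical range in [-1, 1], hence N = M_r(hat A) >= r I.
  For M = N + a w w^T and x = M^-1 w, t = w.x, Sherman-Morrison gives
  tr N^-1 - tr M^-1 = a |x|^2 / (1 - a t), while N >= r I at x reads r |x|^2 <= t (1 - a t);
  so 0 < 1 - a t and the difference is at most a t / r <= 1 / r.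
*)

definition outer_prod :: "real^'n \<Rightarrow> real^'n^'n" where
  "outer_prod w = (\<chi> k l. w $ k * w $ l)"

lemma outer_prod_mult_vec: "outer_prod w *v y = (w \<bullet> y) *\<^sub>R w"
  by (simp add: outer_prod_def vec_eq_iff matrix_vector_mult_def inner_vec_def sum_distrib_left mult_ac)

lemma trace_mult_outer_prod: "trace (Z ** outer_prod w) = (Z *v w) \<bullet> w"
  by (simp add: outer_prod_def trace_def matrix_matrix_mult_def matrix_vector_mult_def inner_vec_def
      sum_distrib_left mult_ac)

lemma transpose_add: "transpose (A + B) = transpose A + transpose B"
  by (simp add: transpose_def vec_eq_iff)

lemma transpose_diff: "transpose (A - B) = transpose A - transpose B"
  by (simp add: transpose_def vec_eq_iff)

lemma transpose_outer_prod [simp]: "transpose (outer_prod w) = outer_prod w"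
  by (simp add: outer_prod_def transpose_def vec_eq_iff mult.commute)

lemma matrix_diff_ldistrib: "(A :: 'a::ring_1^'n^'m) ** (B - C) = A ** B - A ** C"
  by (simp add: vec_eq_iff matrix_matrix_mult_def sum_subtractf algebra_simps)

lemma matrix_diff_rdistrib: "((A :: 'a::ring_1^'n^'m) - B) ** C = A ** C - B ** C"
  by (simp add: vec_eq_iff matrix_matrix_mult_def sum_subtractf algebra_simps)

lemma trace_scaleR: "trace (c *\<^sub>R (A :: real^'n^'n)) = c * trace A"
  by (simp add: trace_def sum_distrib_left)

lemma matrix_inv_right:
  fixes M :: "real^'n^'n"
  assumes "invertible M"
  shows "M ** matrix_inv M = mat 1"
  using someI_ex[OF assms[unfolded invertible_def]] unfolding matrix_inv_def by auto

lemma matrix_inv_left: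
  fixes M :: "real^'n^'n"
  assumes "invertible M"
  shows "matrix_inv M ** M = mat 1"
  using someI_ex[OF assms[unfolded invertible_def]] unfolding matrix_inv_def by auto

lemma transpose_matrix_inv_symmetric:
  fixes M :: "real^'n^'n"
  assumes "transpose M = M" and "invertible M"
  shows "transpose (matrix_inv M) = matrix_inv M"
proof -
  let ?X = "matrix_inv M"
  have "M ** transpose ?X = mat 1"
    using arg_cong[OF matrix_inv_left[OF assms(2)], of transpose]
    by (simp add: matrix_transpose_mul assms(1))
  then have "?X ** M ** transpose ?X = ?X"
    by (metis matrix_mul_assoc matrix_mul_rid)
  then show ?thesis
    by (simp add: matrix_inv_left[OF assms(2)])
qed

lemma invertible_if_coercive:
  fixes M :: "real^'n^'n"
  assumes "0 < r" and coercive: "\<forall>x. r * (x \<bullet> x) \<le> x \<bullet> (M *v x)"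
  shows "invertible M"
proof -
  have "x = 0" if "M *v x = 0" for x
  proof -
    have "r * (x \<bullet> x) \<le> 0" using coercive that by (metis inner_zero_right)
    with \<open>0 < r\<close> have "x \<bullet> x \<le> 0" by (simp add: mult_le_0_iff)
    then show "x = 0" by (metis inner_ge_zero inner_eq_zero_iff order_antisym)
  qed
  then show ?thesis
    using matrix_left_invertible_ker invertible_left_inverse by blast
qed

text \<open>Sherman--Morrison, read off on the trace.\<close>
lemma trace_matrix_inv_rank_one_update:
  fixes M :: "real^'n^'n"
  assumes symM: "transpose M = M" and invM: "invertible M"
    and invN: "invertible (M - a *\<^sub>R outer_prod w)"
  defines "x \<equiv> matrix_inv M *v w"
  shows "1 - a * (w \<bullet> x) \<noteq> 0"
    and "trace (matrix_inv (M - a *\<^sub>R outer_prod w)) - trace (matrix_inv M)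
           = a * (x \<bullet> x) / (1 - a * (w \<bullet> x))"
proof -
  define N where "N = M - a *\<^sub>R outer_prod w"
  define X where "X = matrix_inv M"
  define Y where "Y = matrix_inv N"
  define t where "t = w \<bullet> x"
  have Mx: "M *v x = w"
    by (simp add: x_def matrix_vector_mul_assoc matrix_inv_right[OF invM])
  have Nx: "N *v x = (1 - a * t) *\<^sub>R w"
    by (simp add: N_def t_def Mx outer_prod_mult_vec
        scaleR_matrix_vector_assoc[symmetric] algebra_simps)
  have YN: "Y ** N = mat 1"
    using invN by (simp add: Y_def N_def matrix_inv_left)
  show t1: "1 - a * t \<noteq> 0" unfolding t_def[symmetric]
  proof
    assume "1 - a * t = 0"
    then have "N *v x = 0" using Nx by simp
    then have "x = 0"
      by (metis YN matrix_vector_mul_assoc matrix_vector_mul_lid matrix_vector_mult_0_right)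
    then show False using \<open>1 - a * t = 0\<close> by (simp add: t_def)
  qed
  have Yw: "Y *v w = (1 / (1 - a * t)) *\<^sub>R x"
  proof -
    have "x = Y *v (N *v x)" by (simp add: matrix_vector_mul_assoc YN)
    also have "\<dots> = (1 - a * t) *\<^sub>R (Y *v w)" by (simp add: Nx matrix_vector_mult_scaleR)
    finally show ?thesis using t1 by simp
  qed
  have YMX: "Y ** M ** X = Y"
    by (metis X_def invM matrix_inv_right matrix_mul_assoc matrix_mul_rid)
  have YNX: "Y ** N ** X = X" by (simp add: YN)
  have "Y - X = Y ** (M - N) ** X"
    by (simp add: matrix_diff_ldistrib matrix_diff_rdistrib YMX YNX)
  also have "\<dots> = a *\<^sub>R (Y ** outer_prod w ** X)"
    by (simp add: N_def scalar_matrix_assoc matrix_scalar_ac)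
  finally have "trace Y - trace X = a * trace (Y ** outer_prod w ** X)"
    by (metis trace_sub trace_scaleR)
  also have "trace (Y ** outer_prod w ** X) = ((X ** Y) *v w) \<bullet> w"
    by (metis trace_mul_sym matrix_mul_assoc trace_mult_outer_prod)
  also have "\<dots> = (X *v x) \<bullet> w / (1 - a * t)"
    by (simp flip: matrix_vector_mul_assoc add: Yw matrix_vector_mult_scaleR)
  also have "(X *v x) \<bullet> w = x \<bullet> x"
    using transpose_matrix_inv_symmetric[OF symM invM]
    by (metis X_def x_def dot_lmul_matrix vector_transpose_matrix)
  finally show "trace (matrix_inv (M - a *\<^sub>R outer_prod w)) - trace (matrix_inv M)
           = a * (x \<bullet> x) / (1 - a * (w \<bullet> x))"
    by (simp add: X_def Y_def N_def t_def)
qed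

lemma trace_matrix_inv_rank_one_update_le:
  fixes N :: "real^'n^'n"
  assumes symN: "transpose N = N" and "0 < r" and "0 \<le> a"
    and coercive: "\<forall>x. r * (x \<bullet> x) \<le> x \<bullet> (N *v x)"
  shows "trace (matrix_inv N) - trace (matrix_inv (N + a *\<^sub>R outer_prod w)) \<le> 1 / r"
proof -
  define M where "M = N + a *\<^sub>R outer_prod w"
  have N: "N = M - a *\<^sub>R outer_prod w" by (simp add: M_def)
  have symM: "transpose M = M"
    by (simp add: M_def transpose_add transpose_scalar symN)
  have "r * (y \<bullet> y) \<le> y \<bullet> (M *v y)" for y
  proof -
    have "y \<bullet> (M *v y) = y \<bullet> (N *v y) + a * (w \<bullet> y)\<^sup>2"
      by (simp add: M_def matrix_vector_mult_add_rdistrib outer_prod_mult_vec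
          scaleR_matrix_vector_assoc[symmetric] inner_add_right power2_eq_square inner_commute)
    then show ?thesis using coercive \<open>0 \<le> a\<close> by (smt (verit) zero_le_mult_iff zero_le_power2)
  qed
  then have invM: "invertible M" using invertible_if_coercive[OF \<open>0 < r\<close>] by blast
  have invN: "invertible N" using invertible_if_coercive[OF \<open>0 < r\<close> coercive] .
  define x where "x = matrix_inv M *v w"
  define t where "t = w \<bullet> x"
  define q where "q = x \<bullet> x"
  have trace_eq: "trace (matrix_inv N) - trace (matrix_inv M) = a * q / (1 - a * t)"
    using trace_matrix_inv_rank_one_update(2)[OF symM invM, of a w] invN
    by (simp add: N x_def t_def q_def)
  have "M *v x = w"
    by (simp add: x_def matrix_vector_mul_assoc matrix_inv_right[OF invM])
  then have "N *v x = (1 - a * t) *\<^sub>R w"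
    by (simp add: N t_def outer_prod_mult_vec
        scaleR_matrix_vector_assoc[symmetric] algebra_simps)
  then have key: "r * q \<le> t * (1 - a * t)"
    using coercive[rule_format, of x] by (simp add: q_def t_def inner_commute mult.commute)
  have "1 - a * t \<noteq> 0"
    using trace_matrix_inv_rank_one_update(1)[OF symM invM, of a w] invN by (simp add: N x_def t_def)
  moreover have "\<not> 1 - a * t < 0"
  proof
    assume "1 - a * t < 0"
    moreover have "0 \<le> t * (1 - a * t)"
      using key \<open>0 < r\<close> by (smt (verit) q_def inner_ge_zero mult_nonneg_nonneg)
    ultimately have "t \<le> 0" by (simp add: zero_le_mult_iff)
    with \<open>1 - a * t < 0\<close> \<open>0 \<le> a\<close> show False by (smt (verit) mult_nonneg_nonpos)
  qed
  ultimately have "0 < 1 - a * t" by linarith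
  have "r * (a * q) \<le> (a * t) * (1 - a * t)"
    using mult_left_mono[OF key \<open>0 \<le> a\<close>] by (simp add: algebra_simps)
  also have "\<dots> \<le> 1 - a * t"
    using \<open>0 < 1 - a * t\<close> by (simp add: mult_left_le_one_le)
  finally have "a * q / (1 - a * t) \<le> 1 / r"
    using \<open>0 < r\<close> \<open>0 < 1 - a * t\<close> by (simp add: field_simps)
  then show ?thesis using trace_eq by (simp add: M_def)
qed

definition normalized_adjacency :: "real^'n \<Rightarrow> real^'n^'n \<Rightarrow> real^'n^'n" where
  "normalized_adjacency d B = (\<chi> k l. B $ k $ l / (sqrt (d $ k) * sqrt (d $ l)))"

definition regularized_matrix :: "real \<Rightarrow> real^'n \<Rightarrow> real^'n^'n \<Rightarrow> real^'n^'n" where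
  "regularized_matrix r d B = (1 + r) *\<^sub>R mat 1 - normalized_adjacency d B
     + (1 / (\<Sum>k\<in>UNIV. d $ k)) *\<^sub>R outer_prod (\<chi> k. sqrt (d $ k))"

lemma transpose_eq_self_nth:
  assumes "transpose B = B"
  shows "B $ l $ k = B $ k $ l"
  using assms by (metis transpose_def vec_lambda_beta)

lemma diag_mult_mult_diag:
  fixes B :: "'a::comm_semiring_1^'n^'n"
  shows "(\<chi> k l. if k = l then c k else 0) ** B ** (\<chi> k l. if k = l then c k else 0)
     = (\<chi> k l. c k * B $ k $ l * c l)"
  by (simp add: vec_eq_iff matrix_matrix_mult_def if_distrib if_distribR cong: if_cong)

lemma Kreg_eq_trace_regularized_matrix:
  "Kreg r B = trace (matrix_inv (regularized_matrix r (deg B) B)) - 1 / (1 + r)"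
  by (simp add: Kreg_def Let_def regularized_matrix_def normalized_adjacency_def outer_prod_def
      diag_mult_mult_diag)

lemma inner_normalized_adjacency_le:
  fixes B :: "real^'n^'n"
  assumes symB: "transpose B = B" and nonneg: "\<forall>k l. 0 \<le> B $ k $ l"
    and deg_pos: "\<forall>k. 0 < deg B $ k"
  shows "x \<bullet> (normalized_adjacency (deg B) B *v x) \<le> x \<bullet> x"
proof -
  define d where "d = deg B"
  define y where "y k = x $ k / sqrt (d $ k)" for k
  have row_sum: "(\<Sum>k\<in>UNIV. \<Sum>l\<in>UNIV. B $ k $ l * f k) = (\<Sum>k\<in>UNIV. d $ k * f k)" for f
    by (simp add: d_def deg_def matrix_vector_mult_def sum_distrib_right)
  have col_sum: "(\<Sum>k\<in>UNIV. \<Sum>l\<in>UNIV. B $ k $ l * f l) = (\<Sum>k\<in>UNIV. d $ k * f k)" for f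
  proof -
    show ?thesis using transpose_eq_self_nth[OF symB] by (subst sum.swap) (simp add: row_sum)
  qed
  have "x \<bullet> (normalized_adjacency d B *v x) = (\<Sum>k\<in>UNIV. \<Sum>l\<in>UNIV. B $ k $ l * (y k * y l))"
    by (simp add: normalized_adjacency_def inner_vec_def matrix_vector_mult_def sum_distrib_left
        y_def algebra_simps)
  also have "\<dots> \<le> (\<Sum>k\<in>UNIV. \<Sum>l\<in>UNIV. B $ k $ l * ((y k)\<^sup>2 + (y l)\<^sup>2) / 2)"
  proof (intro sum_mono)
    fix k l
    have "B $ k $ l * (2 * (y k * y l)) \<le> B $ k $ l * ((y k)\<^sup>2 + (y l)\<^sup>2)"
      using nonneg sum_squares_bound[of "y k" "y l"] by (simp add: mult_left_mono)
    then show "B $ k $ l * (y k * y l) \<le> B $ k $ l * ((y k)\<^sup>2 + (y l)\<^sup>2) / 2" by simp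
  qed
  also have "\<dots> = (\<Sum>k\<in>UNIV. d $ k * (y k)\<^sup>2)"
    by (simp only: add_divide_distrib distrib_left sum.distrib flip: sum_divide_distrib)
      (simp add: row_sum col_sum)
  also have "\<dots> = x \<bullet> x"
    using deg_pos by (auto simp: d_def y_def inner_vec_def power_divide power2_eq_square[symmetric]
        less_imp_le intro!: sum.cong) (metis less_irrefl)
  finally show ?thesis by (simp add: d_def)
qed

lemma regularized_matrix_coercive:
  fixes B :: "real^'n^'n"
  assumes "transpose B = B" and "\<forall>k l. 0 \<le> B $ k $ l" and deg_pos: "\<forall>k. 0 < deg B $ k"
  shows "r * (x \<bullet> x) \<le> x \<bullet> (regularized_matrix r (deg B) B *v x)"
proof -
  define s :: "real^'n" where "s = (\<chi> k. sqrt (deg B $ k))"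
  have "0 \<le> 1 / (\<Sum>k\<in>UNIV. deg B $ k)"
    using deg_pos by (simp add: sum_nonneg less_imp_le)
  then have "0 \<le> (1 / (\<Sum>k\<in>UNIV. deg B $ k)) * (s \<bullet> x)\<^sup>2" by simp
  moreover have "x \<bullet> (normalized_adjacency (deg B) B *v x) \<le> x \<bullet> x"
    using inner_normalized_adjacency_le assms by blast
  ultimately show ?thesis
    by (simp add: regularized_matrix_def s_def[symmetric] scaleR_matrix_vector_assoc[symmetric]
        outer_prod_mult_vec inner_commute power2_eq_square algebra_simps)
qed

lemma transpose_regularized_matrix:
  assumes "transpose B = B"
  shows "transpose (regularized_matrix r d B) = regularized_matrix r d B"
proof -
  have "transpose (normalized_adjacency d B) = normalized_adjacency d B"
    using assms by (simp add: normalized_adjacency_def transpose_def vec_eq_iff mult.commute)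
  then show ?thesis
    by (simp add: regularized_matrix_def transpose_add transpose_diff transpose_scalar)
qed

definition edge_vector :: "'n \<Rightarrow> 'n \<Rightarrow> real^'n" where
  "edge_vector i j = axis i 1 - axis j 1"

lemma A_hat_nth: "A_hat B i j $ k $ l = B $ k $ l + B $ i $ j * (edge_vector i j $ k * edge_vector i j $ l)"
  by (simp add: A_hat_def edge_vector_def Let_def)

lemma deg_A_hat [simp]: "deg (A_hat B i j) = deg B"
proof -
  have "(\<Sum>l\<in>UNIV. edge_vector i j $ l) = 0"
    by (simp add: edge_vector_def axis_def sum_subtractf)
  then show ?thesis
    by (simp add: deg_def vec_eq_iff matrix_vector_mult_def A_hat_nth sum.distrib
        flip: sum_distrib_left)
qed

lemma transpose_A_hat:
  assumes "transpose B = B"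
  shows "transpose (A_hat B i j) = A_hat B i j"
  using assms by (simp add: transpose_def vec_eq_iff A_hat_nth mult.commute)

lemma A_hat_nonneg:
  assumes "transpose B = B" and "\<forall>k l. 0 \<le> B $ k $ l" and "i \<noteq> j"
  shows "0 \<le> A_hat B i j $ k $ l"
proof -
  show ?thesis
    using transpose_eq_self_nth[OF assms(1)] assms(2,3) by (auto simp: A_hat_nth edge_vector_def axis_def)
qed

lemma regularized_matrix_A_hat:
  "regularized_matrix r d (A_hat B i j)
    = regularized_matrix r d B - B $ i $ j *\<^sub>R outer_prod (\<chi> k. edge_vector i j $ k / sqrt (d $ k))"
proof -
  have "normalized_adjacency d (A_hat B i j)
      = normalized_adjacency d B + B $ i $ j *\<^sub>R outer_prod (\<chi> k. edge_vector i j $ k / sqrt (d $ k))"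
    by (simp add: normalized_adjacency_def outer_prod_def vec_eq_iff A_hat_nth add_divide_distrib)
  then show ?thesis by (simp add: regularized_matrix_def algebra_simps)
qed

theorem theorem10:
  fixes A :: "real^'n^'n" and i j :: 'n and r :: real
  assumes sym: "transpose A = A"
    and nonneg: "\<forall>k l. 0 \<le> A $ k $ l"
    and deg_pos: "\<forall>k. deg A $ k > 0"
    and conn: "graph_connected A"
    and ij: "i \<noteq> j"
    and aij: "A $ i $ j > 0"
    and cut: "is_cut_edge A i j"
    and r: "r > 0"
  shows "c_score r A i j \<le> 1 / r"
proof -
  define w where "w = (\<chi> k. edge_vector i j $ k / sqrt (deg A $ k))"
  let ?N = "regularized_matrix r (deg A) (A_hat A i j)"
  have "c_score r A i j = trace (matrix_inv ?N) - trace (matrix_inv (?N + A $ i $ j *\<^sub>R outer_prod w))"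
    by (simp add: c_score_def Kreg_eq_trace_regularized_matrix regularized_matrix_A_hat w_def)
  also have "\<dots> \<le> 1 / r"
  proof (rule trace_matrix_inv_rank_one_update_le)
    show "transpose ?N = ?N"
      using transpose_regularized_matrix transpose_A_hat[OF sym] by blast
    show "\<forall>x. r * (x \<bullet> x) \<le> x \<bullet> (?N *v x)"
      using regularized_matrix_coercive[OF transpose_A_hat[OF sym]] A_hat_nonneg[OF sym nonneg ij] deg_pos
      by simp
  qed (use r aij in auto)
  finally show ?thesis .
qed

end
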